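(* Let $\lambda_{\max}>1$ and let $F:[0,\lambda_{\max}]\to\mathbb{R}_+$ be continuously differentiable with $F(0)=0$, such that $F(x)<F^\star$ for all $x\in[0,1)$, $F'(1)>0$, and $F$ is concave-like. Then $F(x)\le F'(1)(x-1)+F(1)$ for all $x\in[0,\lambda_{\max}]$.
   Context: $F^\star=\sup\{\mathbb{E}_\alpha[F(X)]:\alpha$ a probability measure on $[0,\lambda_{\max}]$, $X\sim\alpha$, $\mathbb{E}_\alpha[X]\le1\}$. $F$ is concave-like if for all $x_1,x_2\in[0,\lambda_{\max}]\setminus\{1\}$, $p\in(0,1)$ with $px_1+(1-p)x_2=1$, we have $F(1)>pF(x_1)+(1-p)F(x_2)$. *)

theory Defs
  imports "HOL-Probability.Probability"
begin

definition Fstar :: "(real \<Rightarrow> real) \<Rightarrow> real \<Rightarrow> real" where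
  "Fstar F lmax =
     (SUP M \<in> {M :: real measure. prob_space M
                  \<and> sets M = sets (restrict_space borel {0..lmax})
                  \<and> (\<integral>x. x \<partial>M) \<le> 1}.
        (\<integral>x. F x \<partial>M))"

definition concave_like :: "(real \<Rightarrow> real) \<Rightarrow> real \<Rightarrow> bool" where
  "concave_like F lmax \<longleftrightarrow>
     (\<forall>x1 \<in> {0..lmax} - {1}. \<forall>x2 \<in> {0..lmax} - {1}. \<forall>p::real.
        0 < p \<and> p < 1 \<and> p * x1 + (1 - p) * x2 = 1 \<longrightarrow>
        F 1 > p * F x1 + (1 - p) * F x2)"

end

theory Submission
  imports Defs
begin

text \<open>Concave-likeness at the point 1 says that every slope of F from 1 to a point on the right is
  smaller than every slope from a point on the left to 1. Letting the other point tend to 1, both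
  kinds of slopes are compared with F'(1), which places F below its tangent at 1 on either side.\<close>

lemma slope_tendsto_at_right_if_has_real_derivative:
  fixes f :: "real \<Rightarrow> real"
  assumes "(f has_real_derivative D) (at c within S)" "{c..b} \<subseteq> S" "c < b"
  shows "((\<lambda>y. (f y - f c) / (y - c)) \<longlongrightarrow> D) (at_right c)"
proof -
  have "((\<lambda>y. (f y - f c) / (y - c)) \<longlongrightarrow> D) (at c within {c..b})"
    using assms(1,2) by (auto simp: has_field_derivative_iff intro: tendsto_within_subset)
  then show ?thesis
    using \<open>c < b\<close> by (simp add: at_within_Icc_at_right)
qed

lemma slope_tendsto_at_left_if_has_real_derivative:
  fixes f :: "real \<Rightarrow> real"
  assumes "(f has_real_derivative D) (at c within S)" "{a..c} \<subseteq> S" "a < c"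
  shows "((\<lambda>y. (f y - f c) / (y - c)) \<longlongrightarrow> D) (at_left c)"
proof -
  have "((\<lambda>y. (f y - f c) / (y - c)) \<longlongrightarrow> D) (at c within {a..c})"
    using assms(1,2) by (auto simp: has_field_derivative_iff intro: tendsto_within_subset)
  then show ?thesis
    using \<open>a < c\<close> by (simp add: at_within_Icc_at_left)
qed

lemma le_tangent_if_slopes_ordered:
  fixes f :: "real \<Rightarrow> real"
  assumes deriv: "(f has_real_derivative D) (at c within {a..b})"
    and "a < c" "c < b"
    and slopes: "\<And>x y. a \<le> x \<Longrightarrow> x < c \<Longrightarrow> c < y \<Longrightarrow> y \<le> b \<Longrightarrow>
                   (f y - f c) / (y - c) \<le> (f c - f x) / (c - x)"
    and x: "x \<in> {a..b}"
  shows "f x \<le> f c + D * (x - c)"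
proof (cases x c rule: linorder_cases)
  case less
  have "eventually (\<lambda>y. (f y - f c) / (y - c) \<le> (f c - f x) / (c - x)) (at_right c)"
    using \<open>c < b\<close> x less
    by (auto simp: eventually_at_right_field intro!: exI[of _ b] slopes)
  then have "D \<le> (f c - f x) / (c - x)"
    using slope_tendsto_at_right_if_has_real_derivative[OF deriv _ \<open>c < b\<close>] \<open>a < c\<close>
    by (intro tendsto_upperbound) auto
  then show ?thesis
    using less by (simp add: field_simps)
next
  case greater
  have "eventually (\<lambda>y. (f x - f c) / (x - c) \<le> (f c - f y) / (c - y)) (at_left c)"
    using \<open>a < c\<close> x greater
    by (auto simp: eventually_at_left_field intro!: exI[of _ a] slopes)
  moreover have "(f c - f y) / (c - y) = (f y - f c) / (y - c)" for y
    by (metis minus_diff_eq minus_divide_divide)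
  ultimately have "(f x - f c) / (x - c) \<le> D"
    using slope_tendsto_at_left_if_has_real_derivative[OF deriv _ \<open>a < c\<close>] \<open>c < b\<close>
    by (intro tendsto_lowerbound) auto
  then show ?thesis
    using greater by (simp add: field_simps)
qed simp

lemma concave_like_slopes_at_1:
  assumes "concave_like F lmax" "0 \<le> x" "x < 1" "1 < y" "y \<le> lmax"
  shows "(F y - F 1) / (y - 1) < (F 1 - F x) / (1 - x)"
proof -
  define p where "p = (y - 1) / (y - x)"
  have "y - x > 0"
    using assms(3,4) by simp
  have "0 < p" "p < 1"
    using assms(3,4) by (auto simp: p_def field_simps)
  have one_minus_p: "1 - p = (1 - x) / (y - x)"
    using \<open>y - x > 0\<close> by (simp add: p_def field_simps)
  have "p * x + (1 - p) * y = ((y - 1) * x + (1 - x) * y) / (y - x)"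
    unfolding one_minus_p by (simp add: p_def add_divide_distrib)
  then have "p * x + (1 - p) * y = 1"
    using \<open>y - x > 0\<close> by (simp add: field_simps)
  then have "p * F x + (1 - p) * F y < F 1"
    using assms \<open>0 < p\<close> \<open>p < 1\<close> unfolding concave_like_def by auto
  moreover have "(y - x) * p = y - 1" "(y - x) * (1 - p) = 1 - x"
    using \<open>y - x > 0\<close> one_minus_p by (simp_all add: p_def)
  then have "(y - x) * (p * F x + (1 - p) * F y) = (y - 1) * F x + (1 - x) * F y"
    by (simp add: distrib_left mult.assoc[symmetric])
  ultimately have "(y - 1) * F x + (1 - x) * F y < (y - x) * F 1"
    using \<open>y - x > 0\<close> by (metis mult_strict_left_mono)
  then show ?thesis
    using assms(3,4) by (simp add: field_simps)
qed

theorem lemmaC1: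
  fixes F F' :: "real \<Rightarrow> real" and lmax :: real
  assumes "lmax > 1"
    and "\<forall>x \<in> {0..lmax}. F x \<ge> 0"
    and "\<forall>x \<in> {0..lmax}. (F has_real_derivative F' x) (at x within {0..lmax})"
    and "continuous_on {0..lmax} F'"
    and "F 0 = 0"
    and "\<forall>x \<in> {0..<1}. F x < Fstar F lmax"
    and "F' 1 > 0"
    and "concave_like F lmax"
  shows "\<forall>x \<in> {0..lmax}. F x \<le> F' 1 * (x - 1) + F 1"
proof
  fix x assume "x \<in> {0..lmax}"
  have "(F has_real_derivative F' 1) (at 1 within {0..lmax})"
    using assms(1,3) by auto
  then have "F x \<le> F 1 + F' 1 * (x - 1)"
    using assms(1,8) \<open>x \<in> {0..lmax}\<close>
    by (auto intro!: le_tangent_if_slopes_ordered less_imp_le[OF concave_like_slopes_at_1])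
  then show "F x \<le> F' 1 * (x - 1) + F 1"
    by simp
qed

end
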